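(* Let $(A,C,k)$ be an instance and $W$ a committee with representation ratio $\rho$. Then every CC-completion of $W$ has representation ratio at least $\rho+(1-\rho)\frac{k-|W|}{k}$.
   Context: An instance $(A,C,k)$ consists of a finite nonempty candidate set $C$, voters $N=\{1,\dots,n\}$, approval sets $A_i\subseteq C$, and a committee size $1\le k\le|C|$. A committee is $W\subseteq C$ with $|W|\le k$. $\mathrm{cov}(W)=|\{i\in N: A_i\cap W\ne\emptyset\}|$; the representation ratio of $W$ is $\mathrm{cov}(W)/\max\{\mathrm{cov}(W'):W'\subseteq C,|W'|=k\}$. A CC-completion of $W$ is $W\cup T$ where $T\subseteq C\setminus W$, $|T|=k-|W|$, and $T$ maximizes $\mathrm{cov}(W\cup T)$ among such sets. *)

theory Defs
  imports Complex_Main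
begin

definition cc_instance :: "'c set \<Rightarrow> nat \<Rightarrow> (nat \<Rightarrow> 'c set) \<Rightarrow> nat \<Rightarrow> bool" where
  "cc_instance C n A k \<longleftrightarrow> finite C \<and> C \<noteq> {} \<and> (\<forall>i\<in>{1..n}. A i \<subseteq> C) \<and> 1 \<le> k \<and> k \<le> card C"

definition committee :: "'c set \<Rightarrow> nat \<Rightarrow> 'c set \<Rightarrow> bool" where
  "committee C k W \<longleftrightarrow> W \<subseteq> C \<and> card W \<le> k"

definition cov :: "nat \<Rightarrow> (nat \<Rightarrow> 'c set) \<Rightarrow> 'c set \<Rightarrow> nat" where
  "cov n A W = card {i \<in> {1..n}. A i \<inter> W \<noteq> {}}"

definition opt_cov :: "'c set \<Rightarrow> nat \<Rightarrow> (nat \<Rightarrow> 'c set) \<Rightarrow> nat \<Rightarrow> nat" where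
  "opt_cov C n A k = Max {cov n A W' | W'. W' \<subseteq> C \<and> card W' = k}"

definition rep_ratio :: "'c set \<Rightarrow> nat \<Rightarrow> (nat \<Rightarrow> 'c set) \<Rightarrow> nat \<Rightarrow> 'c set \<Rightarrow> real" where
  "rep_ratio C n A k W = real (cov n A W) / real (opt_cov C n A k)"

definition cc_completion :: "'c set \<Rightarrow> nat \<Rightarrow> (nat \<Rightarrow> 'c set) \<Rightarrow> nat \<Rightarrow> 'c set \<Rightarrow> 'c set \<Rightarrow> bool" where
  "cc_completion C n A k W W' \<longleftrightarrow> (\<exists>T. T \<subseteq> C - W \<and> card T = k - card W \<and>
      (\<forall>T'. T' \<subseteq> C - W \<and> card T' = k - card W \<longrightarrow> cov n A (W \<union> T') \<le> cov n A (W \<union> T)) \<and>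
      W' = W \<union> T)"

end

theory Submission
  imports Defs
begin

text \<open>Fix an optimal committee Q and put D = Q - W, m = k - |W|. Charging each voter covered
  by Q but not by W to one approving candidate of D gives additive weights on D whose total is
  at least opt - cov(W). As |D| \<le> k, some at most m candidates of D carry at least an m/k
  fraction of that total, so adding them (padded to m candidates) to W covers at least
  cov(W) + (m/k)(opt - cov(W)) voters, and a CC-completion covers at least as many.\<close>

definition covered_voters :: "nat \<Rightarrow> (nat \<Rightarrow> 'c set) \<Rightarrow> 'c set \<Rightarrow> nat set" where
  "covered_voters n A W = {i \<in> {1..n}. A i \<inter> W \<noteq> {}}"

lemma exists_subset_sum_ge_average:
  fixes g :: "'a \<Rightarrow> 'b::linordered_semidom"
  assumes "finite D" "m \<le> card D"
  shows "\<exists>S\<subseteq>D. card S = m \<and> of_nat m * sum g D \<le> of_nat (card D) * sum g S"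
  using assms
proof (induction "card D" arbitrary: D)
  case 0
  then show ?case by auto
next
  case (Suc j)
  show ?case
  proof (cases "m = card D")
    case True
    then show ?thesis by (intro exI[of _ D]) (simp add: mult.commute)
  next
    case False
    obtain d where d: "d \<in> D" and d_min: "\<And>x. x \<in> D \<Longrightarrow> g d \<le> g x"
    proof -
      have "D \<noteq> {}" using Suc.hyps(2) by auto
      then have "Min (g ` D) \<in> g ` D" using Suc.prems(1) by simp
      then obtain d where "d \<in> D" "g d = Min (g ` D)" by auto
      then show thesis using that Suc.prems(1) by simp
    qed
    have card_rest: "j = card (D - {d})" using Suc.hyps(2) d by simp
    obtain S where S: "S \<subseteq> D - {d}" "card S = m"
      and avg: "of_nat m * sum g (D - {d}) \<le> of_nat j * sum g S"
      using Suc.hyps(1)[OF card_rest] Suc.prems False card_rest Suc.hyps(2) by auto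
    have "of_nat m * g d \<le> sum g S"
      using sum_mono[of S "\<lambda>_. g d" g] S d_min by auto
    moreover have "sum g D = g d + sum g (D - {d})"
      using d Suc.prems(1) by (simp add: sum.remove)
    ultimately have "of_nat m * sum g D \<le> sum g S + of_nat j * sum g S"
      using avg by (simp add: distrib_left add_mono)
    also have "\<dots> = of_nat (card D) * sum g S"
      using Suc.hyps(2)[symmetric] by (simp add: algebra_simps)
    finally show ?thesis using S by blast
  qed
qed

lemma exists_subset_le_card_sum_ge_fraction:
  fixes g :: "'a \<Rightarrow> nat"
  assumes "finite D" "card D \<le> k" "m \<le> k"
  shows "\<exists>S\<subseteq>D. card S \<le> m \<and> m * sum g D \<le> k * sum g S"
proof (cases "m \<le> card D")
  case True
  then obtain S where "S \<subseteq> D" "card S = m" "m * sum g D \<le> card D * sum g S"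
    using exists_subset_sum_ge_average[OF assms(1) True, of g] by auto
  moreover have "card D * sum g S \<le> k * sum g S" using assms(2) by simp
  ultimately show ?thesis by (metis order.refl order.trans)
next
  case False
  then show ?thesis using assms(3) by (intro exI[of _ D]) auto
qed

lemma cov_eq_card_covered_voters: "cov n A W = card (covered_voters n A W)"
  unfolding cov_def covered_voters_def ..

lemma finite_covered_voters [simp]: "finite (covered_voters n A W)"
  unfolding covered_voters_def by simp

lemma cov_mono: "W \<subseteq> W' \<Longrightarrow> cov n A W \<le> cov n A W'"
  unfolding cov_eq_card_covered_voters by (rule card_mono) (auto simp: covered_voters_def)

lemma coverage_gain_dominates_additive:
  fixes n :: nat and A :: "nat \<Rightarrow> 'c set" and W D :: "'c set"
  assumes "finite D"
  obtains g :: "'c \<Rightarrow> nat"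
  where "cov n A (W \<union> D) = cov n A W + sum g D"
    and "\<And>S. S \<subseteq> D \<Longrightarrow> cov n A W + sum g S \<le> cov n A (W \<union> S)"
proof -
  define U where "U = covered_voters n A (W \<union> D) - covered_voters n A W"
  define f where "f i = (SOME c. c \<in> D \<inter> A i)" for i
  define g where "g c = card {i \<in> U. f i = c}" for c
  have f: "f i \<in> D \<inter> A i" if "i \<in> U" for i
    using that someI_ex[of "\<lambda>c. c \<in> D \<inter> A i"]
    unfolding f_def U_def covered_voters_def by auto
  have sum_g: "sum g S = card {i \<in> U. f i \<in> S}" if "S \<subseteq> D" for S
  proof -
    have "finite S" using that assms finite_subset by blast
    then have "card (\<Union>c\<in>S. {i \<in> U. f i = c}) = sum g S"
      unfolding g_def U_def by (intro card_UN_disjoint) auto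
    moreover have "(\<Union>c\<in>S. {i \<in> U. f i = c}) = {i \<in> U. f i \<in> S}" by auto
    ultimately show ?thesis by simp
  qed
  show thesis
  proof
    have "covered_voters n A (W \<union> D) = covered_voters n A W \<union> U"
      unfolding U_def covered_voters_def by auto
    moreover have "card (covered_voters n A W \<union> U) = cov n A W + card U"
      unfolding cov_eq_card_covered_voters U_def by (intro card_Un_disjoint) auto
    moreover have "{i \<in> U. f i \<in> D} = U" using f by auto
    ultimately show "cov n A (W \<union> D) = cov n A W + sum g D"
      unfolding sum_g[OF order.refl] by (simp add: cov_eq_card_covered_voters)
  next
    fix S assume "S \<subseteq> D"
    have "covered_voters n A W \<union> {i \<in> U. f i \<in> S} \<subseteq> covered_voters n A (W \<union> S)"
      using f unfolding U_def covered_voters_def by auto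
    moreover have "covered_voters n A W \<inter> {i \<in> U. f i \<in> S} = {}" unfolding U_def by auto
    ultimately show "cov n A W + sum g S \<le> cov n A (W \<union> S)"
      unfolding cov_eq_card_covered_voters sum_g[OF \<open>S \<subseteq> D\<close>]
      by (metis card_Un_disjoint card_mono finite_Un finite_covered_voters finite_subset)
  qed
qed

lemma exists_completion_with_coverage_gain:
  assumes "finite C" "W \<subseteq> C" "Q \<subseteq> C" "card W \<le> k" "card Q \<le> k" "k \<le> card C"
  obtains T where "T \<subseteq> C - W" "card T = k - card W"
    and "k * cov n A W + (k - card W) * cov n A (W \<union> Q)
           \<le> k * cov n A (W \<union> T) + (k - card W) * cov n A W"
proof -
  define D where "D = Q - W"
  define m where "m = k - card W"
  have "finite D" unfolding D_def using assms(1,3) finite_subset by blast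
  then obtain g :: "'a \<Rightarrow> nat" where gain_D: "cov n A (W \<union> D) = cov n A W + sum g D"
    and gain_le: "\<And>S. S \<subseteq> D \<Longrightarrow> cov n A W + sum g S \<le> cov n A (W \<union> S)"
    using coverage_gain_dominates_additive[of D n A W] by blast
  have "card D \<le> k"
    unfolding D_def using assms(1,3,5) by (meson Diff_subset card_mono finite_subset order.trans)
  then obtain S where "S \<subseteq> D" "card S \<le> m" and S_large: "m * sum g D \<le> k * sum g S"
    using exists_subset_le_card_sum_ge_fraction[OF \<open>finite D\<close>, of k m g] m_def by auto
  moreover have "m \<le> card (C - W)"
    unfolding m_def using assms(1,2,6) by (simp add: card_Diff_subset finite_subset)
  moreover have "S \<subseteq> C - W" using \<open>S \<subseteq> D\<close> assms(3) unfolding D_def by auto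
  ultimately obtain T where T: "S \<subseteq> T" "T \<subseteq> C - W" "card T = m"
    using exists_subset_between[of S m "C - W"] assms(1) by auto
  have "W \<union> S \<subseteq> W \<union> T" using T(1) by auto
  then have gain_T: "cov n A W + sum g S \<le> cov n A (W \<union> T)"
    using gain_le[OF \<open>S \<subseteq> D\<close>] by (meson cov_mono order.trans)
  have "cov n A (W \<union> Q) = cov n A W + sum g D"
    using gain_D unfolding D_def by (simp add: Un_Diff_cancel)
  then have "k * cov n A W + m * cov n A (W \<union> Q) = k * cov n A W + m * sum g D + m * cov n A W"
    by (simp add: algebra_simps)
  also have "\<dots> \<le> k * (cov n A W + sum g S) + m * cov n A W"
    using S_large by (simp add: algebra_simps)
  also have "\<dots> \<le> k * cov n A (W \<union> T) + m * cov n A W"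
    using gain_T by simp
  finally have "k * cov n A W + m * cov n A (W \<union> Q) \<le> k * cov n A (W \<union> T) + m * cov n A W" .
  with T show thesis using that unfolding m_def by blast
qed

lemma opt_cov_attained:
  assumes "finite C" "k \<le> card C"
  obtains Q where "Q \<subseteq> C" "card Q = k" "cov n A Q = opt_cov C n A k"
proof -
  let ?M = "{cov n A Q | Q. Q \<subseteq> C \<and> card Q = k}"
  have "?M \<subseteq> cov n A ` Pow C" by auto
  then have "finite ?M" using assms(1) finite_subset by blast
  moreover obtain Q where "Q \<subseteq> C" "card Q = k"
    using assms(2) by (meson obtain_subset_with_card_n)
  then have "?M \<noteq> {}" by auto
  ultimately have "Max ?M \<in> ?M" by (rule Max_in)
  then show thesis using that unfolding opt_cov_def by auto
qed

theorem lemma3: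
  fixes C :: "'c set" and n k :: nat and A :: "nat \<Rightarrow> 'c set" and W W' :: "'c set" and \<rho> :: real
  assumes "cc_instance C n A k"
    and "committee C k W"
    and "opt_cov C n A k > 0"
    and "\<rho> = rep_ratio C n A k W"
    and "cc_completion C n A k W W'"
  shows "rep_ratio C n A k W' \<ge> \<rho> + (1 - \<rho>) * (real (k - card W) / real k)"
proof -
  have C: "finite C" "k \<le> card C" "1 \<le> k" and W: "W \<subseteq> C" "card W \<le> k"
    using assms(1,2) unfolding cc_instance_def committee_def by auto
  obtain Q where Q: "Q \<subseteq> C" "card Q = k" "cov n A Q = opt_cov C n A k"
    using opt_cov_attained[OF C(1,2)] .
  obtain T0 where T0: "T0 \<subseteq> C - W" "card T0 = k - card W"
    and gain: "k * cov n A W + (k - card W) * cov n A (W \<union> Q)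
                 \<le> k * cov n A (W \<union> T0) + (k - card W) * cov n A W"
    using exists_completion_with_coverage_gain[OF C(1) W(1) Q(1) W(2) _ C(2)] Q(2) by auto
  have "cov n A (W \<union> T0) \<le> cov n A W'"
    using assms(5) T0 unfolding cc_completion_def by auto
  moreover have "opt_cov C n A k \<le> cov n A (W \<union> Q)"
    using Q(3) cov_mono[of Q "W \<union> Q" n A] by simp
  ultimately have "k * cov n A W + (k - card W) * opt_cov C n A k
                     \<le> k * cov n A W' + (k - card W) * cov n A W"
    using gain by (meson add_le_mono mult_le_mono2 order.refl order.trans)
  then have "real k * cov n A W + real (k - card W) * opt_cov C n A k
               \<le> real k * cov n A W' + real (k - card W) * cov n A W"
    by (metis of_nat_add of_nat_le_iff of_nat_mult)
  then have "(real k * cov n A W + real (k - card W) * opt_cov C n A k) * opt_cov C n A k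
               \<le> (real k * cov n A W' + real (k - card W) * cov n A W) * opt_cov C n A k"
    by (rule mult_right_mono) simp
  then show ?thesis
    using assms(3) C(3) unfolding assms(4) rep_ratio_def by (simp add: field_simps)
qed

end
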